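(* For all integers $\ell,k\ge0$, in $U(gl(m|n+1))$, $$\sum_{p=1}^{N}(-1)^{(p)}\big[(\mathcal B^\ell)^p_{\ N},(\mathcal B^k)^N_{\ p}\big]=\sum_{i=0}^{\ell-1}\big(\hat I_i\,\tau_{\ell+k-1-i}-\hat I_{\ell+k-1-i}\,\tau_i\big).$$
   Context: Over $\mathbb{C}$, $N=m+n+1$, parity $(p)=0$ for $1\le p\le m$, $(p)=1$ for $m<p\le N$. $gl(m|n+1)$ has homogeneous basis $E_{pq}$ of parity $(p)+(q)$ with graded bracket $[E_{pq},E_{rs}]=\delta_{qr}E_{ps}-(-1)^{((p)+(q))((r)+(s))}\delta_{ps}E_{rq}$. $\mathcal B^p_{\ q}=(-1)^{(p)}E_{pq}$, with powers $(\mathcal B^k)^p_{\ q}=\sum_r\mathcal B^p_{\ r}(\mathcal B^{k-1})^r_{\ q}$, $(\mathcal B^0)^p_{\ q}=\delta_{pq}$; the entry $(\mathcal B^k)^p_{\ q}$ ($k\ge1$) is homogeneous of parity $(p)+(q)$. $\tau_k=(\mathcal B^k)^N_{\ N}$ (so $\tau_0=1$) and $\hat I_k=\sum_{p=1}^N(-1)^{(p)}(\mathcal B^k)^p_{\ p}$ (so $\hat I_0=m-n-1$), the Casimir elements of $gl(m|n+1)$. The bracket on the left is the graded commutator $[a,b]=ab-(-1)^{|a||b|}ba$ for homogeneous $a,b$. *)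

theory Defs
  imports Complex_Main
begin

definition par :: "nat \<Rightarrow> nat \<Rightarrow> nat" where
  "par m p = (if p \<le> m then 0 else 1)"

definition gcomm :: "nat \<Rightarrow> nat \<Rightarrow> 'a::ring_1 \<Rightarrow> 'a \<Rightarrow> 'a" where
  "gcomm i j a b = a * b - (-1) ^ (i * j) * b * a"

definition gl_rel :: "nat \<Rightarrow> nat \<Rightarrow> (nat \<Rightarrow> nat \<Rightarrow> 'a::ring_1) \<Rightarrow> bool" where
  "gl_rel m n E \<longleftrightarrow>
     (\<forall>p\<in>{1..m+n+1}. \<forall>q\<in>{1..m+n+1}. \<forall>r\<in>{1..m+n+1}. \<forall>s\<in>{1..m+n+1}.
        gcomm (par m p + par m q) (par m r + par m s) (E p q) (E r s)
        = (if q = r then E p s else 0)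
          - (-1) ^ ((par m p + par m q) * (par m r + par m s)) * (if p = s then E r q else 0))"

text \<open>Entries of powers of the matrix B, with B p q = (-1)^(p) E p q.\<close>
fun Bpow :: "nat \<Rightarrow> nat \<Rightarrow> (nat \<Rightarrow> nat \<Rightarrow> 'a::ring_1) \<Rightarrow> nat \<Rightarrow> nat \<Rightarrow> nat \<Rightarrow> 'a" where
  "Bpow m n E 0 p q = (if p = q then 1 else 0)"
| "Bpow m n E (Suc k) p q =
     (\<Sum>r = 1..m+n+1. ((-1) ^ par m p * E p r) * Bpow m n E k r q)"

definition tau :: "nat \<Rightarrow> nat \<Rightarrow> (nat \<Rightarrow> nat \<Rightarrow> 'a::ring_1) \<Rightarrow> nat \<Rightarrow> 'a" where
  "tau m n E k = Bpow m n E k (m+n+1) (m+n+1)"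

definition Ihat :: "nat \<Rightarrow> nat \<Rightarrow> (nat \<Rightarrow> nat \<Rightarrow> 'a::ring_1) \<Rightarrow> nat \<Rightarrow> 'a" where
  "Ihat m n E k = (\<Sum>p = 1..m+n+1. (-1) ^ par m p * Bpow m n E k p p)"

end

theory Submission
  imports Defs
begin

text \<open>By the defining relations, E_pq acts on the entries of every power B^k as on a
  tensor: [E_pq, (B^k)_rs] = \<plusminus>\<delta>_qr (B^k)_ps \<mp> \<delta>_ps (B^k)_rq, by induction on k with the graded
  Leibniz rule. Expanding (B^(l+1))_aN = \<Sum>_r \<plusminus>E_ar (B^l)_rN and using this once more gives a
  recursion in l for [(B^l)_aN, (B^k)_Nd], solved by
  \<Sum>_(i<l) ((B^i)_ad \<tau>_(k+l-1-i) - (B^(k+i))_ad \<tau>_(l-1-i)). Its supertrace over a = d produces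
  the Casimirs Ihat, and reflecting i \<mapsto> l-1-i in the second sum gives the stated form.\<close>

lemma gcomm_mult_right:
  "gcomm i (j + k) x (y * z) = gcomm i j x y * z + (-1) ^ (i * j) * y * gcomm i k x z"
  by (simp add: gcomm_def minus_one_power_iff algebra_simps)

lemma gcomm_mult_left:
  "gcomm (i + j) k (x * y) z = x * gcomm j k y z + (-1) ^ (j * k) * gcomm i k x z * y"
  by (simp add: gcomm_def minus_one_power_iff algebra_simps)

lemma gcomm_sum_right: "gcomm i j x (\<Sum>t\<in>T. f t) = (\<Sum>t\<in>T. gcomm i j x (f t))"
  by (simp add: gcomm_def sum_distrib_left sum_distrib_right sum_subtractf)

lemma gcomm_sum_left: "gcomm i j (\<Sum>t\<in>T. f t) y = (\<Sum>t\<in>T. gcomm i j (f t) y)"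
  by (simp add: gcomm_def sum_distrib_left sum_distrib_right sum_subtractf mult.assoc)

lemma gcomm_minus_one_power_right: "gcomm i j x ((-1) ^ t * y) = (-1) ^ t * gcomm i j x y"
  by (simp add: gcomm_def minus_one_power_iff algebra_simps)

lemma gcomm_minus_one_power_left: "gcomm i j ((-1) ^ t * x) y = (-1) ^ t * gcomm i j x y"
  by (simp add: gcomm_def minus_one_power_iff algebra_simps)

lemma gcomm_cong_parity:
  assumes "even i \<longleftrightarrow> even i'" and "even j \<longleftrightarrow> even j'"
  shows "gcomm i j = gcomm i' j'"
  using assms by (simp add: gcomm_def fun_eq_iff minus_one_power_iff)

lemma sum_lessThan_reflect_mult:
  fixes f g :: "nat \<Rightarrow> 'a::semiring_0"
  shows "(\<Sum>i<l. f (k + i) * g (l - 1 - i)) = (\<Sum>i<l. f (l + k - 1 - i) * g i)"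
proof -
  have "(\<Sum>i<l. f (k + i) * g (l - 1 - i))
      = (\<Sum>i<l. f (k + (l - Suc i)) * g (l - 1 - (l - Suc i)))"
    by (rule sum.nat_diff_reindex[symmetric])
  also have "\<dots> = (\<Sum>i<l. f (l + k - 1 - i) * g i)"
    by (intro sum.cong) (auto intro!: arg_cong2[where f = "\<lambda>a b. f a * g b"])
  finally show ?thesis .
qed

lemma par_cases: "par m p = 0 \<or> par m p = 1"
  by (simp add: par_def)

lemma par_last: "par m (m + n + 1) = 1"
  by (simp add: par_def)

lemma Bpow_add:
  assumes "a \<in> {1..m+n+1}"
  shows "(\<Sum>r = 1..m+n+1. Bpow m n E k a r * Bpow m n E l r b) = Bpow m n E (k + l) a b"
  using assms
proof (induction k arbitrary: a)
  case 0
  have "(\<Sum>r = 1..m+n+1. Bpow m n E 0 a r * Bpow m n E l r b)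
      = (\<Sum>r = 1..m+n+1. if a = r then Bpow m n E l r b else 0)"
    by (rule sum.cong) auto
  with 0 show ?case by (simp del: sum.cl_ivl_Suc)
next
  case (Suc k)
  have "(\<Sum>r = 1..m+n+1. Bpow m n E (Suc k) a r * Bpow m n E l r b)
      = (\<Sum>t = 1..m+n+1. (-1) ^ par m a * E a t
          * (\<Sum>r = 1..m+n+1. Bpow m n E k t r * Bpow m n E l r b))"
    unfolding Bpow.simps sum_distrib_left sum_distrib_right mult.assoc by (rule sum.swap)
  also have "\<dots> = Bpow m n E (Suc k + l) a b"
    using Suc.IH by (simp del: sum.cl_ivl_Suc)
  finally show ?case .
qed

locale gl_relations =
  fixes m n :: nat and E :: "nat \<Rightarrow> nat \<Rightarrow> 'a::ring_1"
  assumes rel: "gl_rel m n E"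
begin

abbreviation "N \<equiv> m + n + 1"
abbreviation "B \<equiv> Bpow m n E"
abbreviation "\<pi> \<equiv> par m"
abbreviation "\<tau> \<equiv> tau m n E"

lemma last_index_mem: "N \<in> {1..N}"
  by simp

lemma gcomm_E_E:
  assumes "p \<in> {1..N}" "q \<in> {1..N}" "r \<in> {1..N}" "s \<in> {1..N}"
  shows "gcomm (\<pi> p + \<pi> q) (\<pi> r + \<pi> s) (E p q) (E r s)
    = (if q = r then E p s else 0)
      - (-1) ^ ((\<pi> p + \<pi> q) * (\<pi> r + \<pi> s)) * (if p = s then E r q else 0)"
  using rel assms unfolding gl_rel_def by blast

text \<open>The two middle terms cancel once summed over t.\<close>

lemma gcomm_E_Bpow_summand:
  assumes p: "p \<in> {1..N}" and q: "q \<in> {1..N}" and r: "r \<in> {1..N}" and t: "t \<in> {1..N}"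
    and IH: "gcomm (\<pi> p + \<pi> q) (\<pi> t + \<pi> s) (E p q) (B k t s)
      = (if q = t then (-1) ^ (\<pi> p + \<pi> q) * B k p s else 0)
        - (-1) ^ ((\<pi> p + \<pi> q) * (\<pi> t + \<pi> s)) * (if p = s then B k t q else 0)"
  defines "\<alpha> \<equiv> \<pi> p + \<pi> q"
  shows "gcomm \<alpha> (\<pi> r + \<pi> s) (E p q) ((-1) ^ \<pi> r * E r t * B k t s)
    = (if q = r then (-1) ^ \<alpha> * ((-1) ^ \<pi> p * E p t * B k t s) else 0)
      - (if t = p then (-1) ^ (\<pi> r + \<alpha> * (\<pi> r + \<pi> p)) * E r q * B k p s else 0)
      + (if t = q then (-1) ^ (\<pi> r + \<alpha> * (\<pi> r + \<pi> p)) * E r q * B k p s else 0)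
      - (if p = s then (-1) ^ (\<alpha> * (\<pi> r + \<pi> s)) * ((-1) ^ \<pi> r * E r t * B k t q) else 0)"
    (is "_ = ?rhs")
proof -
  have parity: "gcomm \<alpha> (\<pi> r + \<pi> s) = gcomm \<alpha> ((\<pi> r + \<pi> t) + (\<pi> t + \<pi> s))"
    by (rule gcomm_cong_parity) auto
  have "gcomm \<alpha> (\<pi> r + \<pi> s) (E p q) ((-1) ^ \<pi> r * E r t * B k t s)
      = (-1) ^ \<pi> r * (gcomm \<alpha> (\<pi> r + \<pi> t) (E p q) (E r t) * B k t s
        + (-1) ^ (\<alpha> * (\<pi> r + \<pi> t)) * E r t * gcomm \<alpha> (\<pi> t + \<pi> s) (E p q) (B k t s))"
    unfolding parity mult.assoc gcomm_minus_one_power_right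
    by (simp only: gcomm_mult_right mult.assoc)
  also have "\<dots> = (-1) ^ \<pi> r * (((if q = r then E p t else 0)
        - (-1) ^ (\<alpha> * (\<pi> r + \<pi> t)) * (if p = t then E r q else 0)) * B k t s
      + (-1) ^ (\<alpha> * (\<pi> r + \<pi> t)) * E r t * ((if q = t then (-1) ^ \<alpha> * B k p s else 0)
        - (-1) ^ (\<alpha> * (\<pi> t + \<pi> s)) * (if p = s then B k t q else 0)))"
    using gcomm_E_E[OF p q r t] IH by (simp add: \<alpha>_def)
  also have "\<dots> = ?rhs"
    using par_cases[of m p] par_cases[of m q] par_cases[of m r] par_cases[of m s] par_cases[of m t]
    by (auto simp: \<alpha>_def minus_one_power_iff algebra_simps)
  finally show ?thesis .
qed

lemma gcomm_E_Bpow_Suc: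
  assumes p: "p \<in> {1..N}" and q: "q \<in> {1..N}" and r: "r \<in> {1..N}"
    and IH: "\<And>t. t \<in> {1..N} \<Longrightarrow> gcomm (\<pi> p + \<pi> q) (\<pi> t + \<pi> s) (E p q) (B k t s)
      = (if q = t then (-1) ^ (\<pi> p + \<pi> q) * B k p s else 0)
        - (-1) ^ ((\<pi> p + \<pi> q) * (\<pi> t + \<pi> s)) * (if p = s then B k t q else 0)"
  shows "gcomm (\<pi> p + \<pi> q) (\<pi> r + \<pi> s) (E p q) (B (Suc k) r s)
      = (if q = r then (-1) ^ (\<pi> p + \<pi> q) * B (Suc k) p s else 0)
        - (-1) ^ ((\<pi> p + \<pi> q) * (\<pi> r + \<pi> s)) * (if p = s then B (Suc k) r q else 0)"
    (is "_ = ?rhs")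
proof -
  have "gcomm (\<pi> p + \<pi> q) (\<pi> r + \<pi> s) (E p q) (B (Suc k) r s)
      = (\<Sum>t = 1..N. gcomm (\<pi> p + \<pi> q) (\<pi> r + \<pi> s) (E p q) ((-1) ^ \<pi> r * E r t * B k t s))"
    by (simp only: Bpow.simps gcomm_sum_right)
  also have "\<dots> = (\<Sum>t = 1..N.
        (if q = r then (-1) ^ (\<pi> p + \<pi> q) * ((-1) ^ \<pi> p * E p t * B k t s) else 0)
      - (if t = p then (-1) ^ (\<pi> r + (\<pi> p + \<pi> q) * (\<pi> r + \<pi> p)) * E r q * B k p s else 0)
      + (if t = q then (-1) ^ (\<pi> r + (\<pi> p + \<pi> q) * (\<pi> r + \<pi> p)) * E r q * B k p s else 0)
      - (if p = s then (-1) ^ ((\<pi> p + \<pi> q) * (\<pi> r + \<pi> s)) * ((-1) ^ \<pi> r * E r t * B k t q)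
         else 0))"
    using gcomm_E_Bpow_summand[OF p q r _ IH] by (intro sum.cong) auto
  also have "\<dots> = ?rhs"
    using p q by (simp add: sum.distrib sum_subtractf sum_distrib_left del: sum.cl_ivl_Suc)
  finally show ?thesis .
qed

lemma gcomm_E_Bpow:
  assumes "p \<in> {1..N}" and "q \<in> {1..N}" and "r \<in> {1..N}"
  shows "gcomm (\<pi> p + \<pi> q) (\<pi> r + \<pi> s) (E p q) (B k r s)
      = (if q = r then (-1) ^ (\<pi> p + \<pi> q) * B k p s else 0)
        - (-1) ^ ((\<pi> p + \<pi> q) * (\<pi> r + \<pi> s)) * (if p = s then B k r q else 0)"
  using assms(3)
proof (induction k arbitrary: r)
  case 0
  show ?case by (auto simp: gcomm_def par_def)
next
  case (Suc k)
  show ?case by (rule gcomm_E_Bpow_Suc[OF assms(1,2) Suc.prems Suc.IH])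
qed

lemma gcomm_Bpow_column_row_summand:
  assumes a: "a \<in> {1..N}" and r: "r \<in> {1..N}"
  shows "gcomm (\<pi> a + \<pi> N) (\<pi> N + \<pi> d) ((-1) ^ \<pi> a * E a r * B l r N) (B k N d)
    = (-1) ^ \<pi> a * E a r * gcomm (\<pi> r + \<pi> N) (\<pi> N + \<pi> d) (B l r N) (B k N d)
      - (if r = N then B k a d * \<tau> l else 0) + (if a = d then B k N r * B l r N else 0)"
    (is "_ = ?rhs")
proof -
  have parity: "gcomm (\<pi> a + \<pi> N) (\<pi> N + \<pi> d)
      = gcomm ((\<pi> a + \<pi> r) + (\<pi> r + \<pi> N)) (\<pi> N + \<pi> d)"
    by (rule gcomm_cong_parity) auto
  have "gcomm (\<pi> a + \<pi> N) (\<pi> N + \<pi> d) ((-1) ^ \<pi> a * E a r * B l r N) (B k N d)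
      = (-1) ^ \<pi> a * (E a r * gcomm (\<pi> r + \<pi> N) (\<pi> N + \<pi> d) (B l r N) (B k N d)
        + (-1) ^ ((\<pi> r + \<pi> N) * (\<pi> N + \<pi> d))
          * gcomm (\<pi> a + \<pi> r) (\<pi> N + \<pi> d) (E a r) (B k N d) * B l r N)"
    unfolding parity mult.assoc gcomm_minus_one_power_left
    by (simp only: gcomm_mult_left mult.assoc)
  also have "\<dots> = (-1) ^ \<pi> a * (E a r * gcomm (\<pi> r + \<pi> N) (\<pi> N + \<pi> d) (B l r N) (B k N d)
        + (-1) ^ ((\<pi> r + \<pi> N) * (\<pi> N + \<pi> d))
          * ((if r = N then (-1) ^ (\<pi> a + \<pi> r) * B k a d else 0)
          - (-1) ^ ((\<pi> a + \<pi> r) * (\<pi> N + \<pi> d)) * (if a = d then B k N r else 0)) * B l r N)"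
    using gcomm_E_Bpow[OF a r last_index_mem, where s = d and k = k] by simp
  also have "\<dots> = ?rhs"
    using par_cases[of m a] par_cases[of m d] par_cases[of m r] par_last[of m n]
    by (auto simp: tau_def minus_one_power_iff algebra_simps)
  finally show ?thesis .
qed

lemma gcomm_Bpow_column_row:
  assumes "a \<in> {1..N}"
  shows "gcomm (\<pi> a + \<pi> N) (\<pi> N + \<pi> d) (B l a N) (B k N d)
    = (\<Sum>i<l. B i a d * \<tau> (k + l - 1 - i) - B (k + i) a d * \<tau> (l - 1 - i))"
  using assms
proof (induction l arbitrary: a)
  case 0
  then show ?case by (simp add: gcomm_def par_last)
next
  case (Suc l)
  let ?X = "B k N d"
  have "gcomm (\<pi> a + \<pi> N) (\<pi> N + \<pi> d) (B (Suc l) a N) ?X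
      = (\<Sum>r = 1..N. gcomm (\<pi> a + \<pi> N) (\<pi> N + \<pi> d) ((-1) ^ \<pi> a * E a r * B l r N) ?X)"
    by (simp only: Bpow.simps gcomm_sum_left)
  also have "\<dots> = (\<Sum>r = 1..N.
        (-1) ^ \<pi> a * E a r * gcomm (\<pi> r + \<pi> N) (\<pi> N + \<pi> d) (B l r N) ?X
      - (if r = N then B k a d * \<tau> l else 0) + (if a = d then B k N r * B l r N else 0))"
    using gcomm_Bpow_column_row_summand[OF Suc.prems] by (intro sum.cong) auto
  also have "\<dots> = (\<Sum>r = 1..N. (-1) ^ \<pi> a * E a r
        * (\<Sum>i<l. B i r d * \<tau> (k + l - 1 - i) - B (k + i) r d * \<tau> (l - 1 - i)))
      - B k a d * \<tau> l + (if a = d then \<tau> (k + l) else 0)"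
    using Suc.IH Bpow_add[OF last_index_mem, where E = E and k = k and l = l and b = N]
    by (simp add: sum.distrib sum_subtractf tau_def del: sum.cl_ivl_Suc)
  also have "\<dots> = (\<Sum>i<l. B (Suc i) a d * \<tau> (k + l - 1 - i)
        - B (Suc (k + i)) a d * \<tau> (l - 1 - i))
      - B k a d * \<tau> l + (if a = d then \<tau> (k + l) else 0)"
    by (simp add: sum_distrib_left sum_distrib_right sum_subtractf right_diff_distrib mult.assoc
        sum.swap[of _ _ "{..<l}"] del: sum.cl_ivl_Suc)
  also have "\<dots> = (\<Sum>i<Suc l. B i a d * \<tau> (k + Suc l - 1 - i)
      - B (k + i) a d * \<tau> (Suc l - 1 - i))"
    unfolding sum.lessThan_Suc_shift by (simp del: Bpow.simps(2) sum.lessThan_Suc)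
  finally show ?case .
qed

lemma supertrace_gcomm_Bpow:
  "(\<Sum>p = 1..N. (-1) ^ \<pi> p * gcomm (\<pi> p + \<pi> N) (\<pi> N + \<pi> p) (B l p N) (B k N p))
    = (\<Sum>i<l. Ihat m n E i * \<tau> (k + l - 1 - i) - Ihat m n E (k + i) * \<tau> (l - 1 - i))"
proof -
  have "(\<Sum>p = 1..N. (-1) ^ \<pi> p * gcomm (\<pi> p + \<pi> N) (\<pi> N + \<pi> p) (B l p N) (B k N p))
      = (\<Sum>p = 1..N. (-1) ^ \<pi> p
          * (\<Sum>i<l. B i p p * \<tau> (k + l - 1 - i) - B (k + i) p p * \<tau> (l - 1 - i)))"
    using gcomm_Bpow_column_row by (intro sum.cong) auto
  also have "\<dots> = (\<Sum>i<l. Ihat m n E i * \<tau> (k + l - 1 - i) - Ihat m n E (k + i) * \<tau> (l - 1 - i))"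
    unfolding Ihat_def
    by (simp add: sum_distrib_left sum_distrib_right sum_subtractf right_diff_distrib mult.assoc
        sum.swap[of _ _ "{..<l}"] del: sum.cl_ivl_Suc Bpow.simps(2))
  finally show ?thesis .
qed

end

theorem proposition12:
  fixes m n l k :: nat
    and E :: "nat \<Rightarrow> nat \<Rightarrow> 'a::ring_1"
    and scal :: "complex \<Rightarrow> 'a"
  assumes scal_one: "scal 1 = 1"
    and scal_add: "\<And>a b. scal (a + b) = scal a + scal b"
    and scal_mult: "\<And>a b. scal (a * b) = scal a * scal b"
    and scal_central: "\<And>a x. scal a * x = x * scal a"
    and rel: "gl_rel m n E"
  shows "(\<Sum>p = 1..m+n+1. (-1) ^ par m p *
            gcomm (par m p + par m (m+n+1)) (par m (m+n+1) + par m p)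
                  (Bpow m n E l p (m+n+1)) (Bpow m n E k (m+n+1) p))
       = (\<Sum>i<l. Ihat m n E i * tau m n E (l+k-1-i) - Ihat m n E (l+k-1-i) * tau m n E i)"
proof -
  interpret gl_relations m n E
    by (rule gl_relations.intro) (rule rel)
  show ?thesis
    unfolding supertrace_gcomm_Bpow sum_subtractf sum_lessThan_reflect_mult
    by (simp add: add.commute)
qed

end
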